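(* Let $b\in\mathfrak{lie}_C$. Then $b$ is a push-invariant polynomial (i.e. $push(b)=b$) if and only if the mould $ma(b)$ is push-invariant.
   Context: $\mathfrak{lie}_C$ is the completed free Lie algebra over $\mathbb{Q}$ on $C_i=\mathrm{ad}(x)^{i-1}(y)$, $i\ge1$, inside $\mathbb{Q}\langle\langle x,y\rangle\rangle$; every element of $\mathfrak{lie}_C$ is uniquely a noncommutative series in the $C_i$. The push operator on words in $x,y$ is $push(x^{a_0}yx^{a_1}y\cdots yx^{a_r})=x^{a_r}yx^{a_0}y\cdots yx^{a_{r-1}}$, trivial on constants and powers of $x$, extended linearly. A mould is a family $A=(A^r)_{r\ge0}$ with $A^r$ a rational function in $u_1,\dots,u_r$; $ma$ sends a series $\sum k_{\underline a}C_{a_1}\cdots C_{a_r}$ (summed over all $r$) to the mould whose depth-$r$ component is $\sum k_{\underline a}u_1^{a_1-1}\cdots u_r^{a_r-1}$. A mould $A$ is push-invariant if $A(u_0,u_1,\dots,u_{r-1})=A(u_1,\dots,u_r)$ for all $r\ge1$, where $u_0=-u_1-\dots-u_r$. *)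

theory Defs
  imports Complex_Main
begin

datatype letter = X | Y

type_synonym word = "letter list"
type_synonym series = "word \<Rightarrow> rat"   \<comment> \<open>element of Q<<x,y>>: coefficient of each word\<close>

definition ser_zero :: series where "ser_zero = (\<lambda>_. 0)"
definition ser_one :: series where "ser_one = (\<lambda>w. if w = [] then 1 else 0)"
definition ser_letter :: "letter \<Rightarrow> series" where
  "ser_letter l = (\<lambda>w. if w = [l] then 1 else 0)"
definition ser_add :: "series \<Rightarrow> series \<Rightarrow> series" where
  "ser_add f g = (\<lambda>w. f w + g w)"
definition ser_scale :: "rat \<Rightarrow> series \<Rightarrow> series" where
  "ser_scale c f = (\<lambda>w. c * f w)"
definition ser_mult :: "series \<Rightarrow> series \<Rightarrow> series" where
  "ser_mult f g = (\<lambda>w. \<Sum>i\<le>length w. f (take i w) * g (drop i w))"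
definition bracket :: "series \<Rightarrow> series \<Rightarrow> series" where
  "bracket a b = (\<lambda>w. ser_mult a b w - ser_mult b a w)"

definition hom :: "nat \<Rightarrow> series \<Rightarrow> series" where
  "hom n f = (\<lambda>w. if length w = n then f w else 0)"

primrec adxy :: "nat \<Rightarrow> series" where
  "adxy 0 = ser_letter Y"
| "adxy (Suc n) = bracket (ser_letter X) (adxy n)"

definition C :: "nat \<Rightarrow> series" where
  "C i = adxy (i - 1)"   \<comment> \<open>only used for i \<ge> 1\<close>

inductive_set lie_poly :: "series set" where
  gen: "1 \<le> i \<Longrightarrow> C i \<in> lie_poly"
| zero: "ser_zero \<in> lie_poly"
| add: "a \<in> lie_poly \<Longrightarrow> b \<in> lie_poly \<Longrightarrow> ser_add a b \<in> lie_poly"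
| scale: "a \<in> lie_poly \<Longrightarrow> ser_scale c a \<in> lie_poly"
| brk: "a \<in> lie_poly \<Longrightarrow> b \<in> lie_poly \<Longrightarrow> bracket a b \<in> lie_poly"

text \<open>The completed free Lie algebra lie_C: series all of whose homogeneous components
  lie in the (graded) Lie algebra generated by the homogeneous C_i.\<close>
definition lie_C :: "series set" where
  "lie_C = {b. \<forall>n. hom n b \<in> lie_poly}"

definition Cprod :: "nat list \<Rightarrow> series" where
  "Cprod as = foldr ser_mult (map C as) ser_one"

definition compositions :: "nat \<Rightarrow> nat list set" where
  "compositions n = {as. (\<forall>a\<in>set as. 1 \<le> a) \<and> sum_list as = n}"

text \<open>The series sum_a k_a C_{a_1}...C_{a_r}; C_{a_1}...C_{a_r} is homogeneous of degree
  a_1+...+a_r, so each coefficient is a finite sum.\<close>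
definition series_of_coeffs :: "(nat list \<Rightarrow> rat) \<Rightarrow> series" where
  "series_of_coeffs k = (\<lambda>w. \<Sum>as\<in>compositions (length w). k as * Cprod as w)"

definition valid_coeffs :: "(nat list \<Rightarrow> rat) \<Rightarrow> bool" where
  "valid_coeffs k \<longleftrightarrow> (\<forall>as. (\<exists>a\<in>set as. a = 0) \<longrightarrow> k as = 0)"

definition C_coeffs :: "series \<Rightarrow> nat list \<Rightarrow> rat" where
  "C_coeffs b = (THE k. valid_coeffs k \<and> series_of_coeffs k = b)"

text \<open>A mould whose depth-r component is a formal power series in commuting u_1..u_r:
  A r e is the coefficient of u_1^(e_1)...u_r^(e_r) (for length e = r).\<close>
type_synonym mould = "nat \<Rightarrow> nat list \<Rightarrow> rat"

definition ma :: "series \<Rightarrow> mould" where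
  "ma b = (\<lambda>r e. if length e = r then C_coeffs b (map Suc e) else 0)"

definition hom_eval :: "mould \<Rightarrow> nat \<Rightarrow> nat \<Rightarrow> rat list \<Rightarrow> rat" where
  "hom_eval A r d u =
     (\<Sum>e\<in>{e. length e = r \<and> sum_list e = d}. A r e * (\<Prod>i<r. (u ! i) ^ (e ! i)))"

text \<open>Push-invariance A(u_0,u_1,...,u_{r-1}) = A(u_1,...,u_r), u_0 = -u_1-...-u_r,
  as an identity of power series, i.e. degree by degree.\<close>
definition push_invariant_mould :: "mould \<Rightarrow> bool" where
  "push_invariant_mould A \<longleftrightarrow>
     (\<forall>r\<ge>1. \<forall>d. \<forall>u::rat list. length u = r \<longrightarrow>
        hom_eval A r d ((- sum_list u) # butlast u) = hom_eval A r d u)"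

text \<open>push(x^a0 y x^a1 ... y x^ar) = x^ar y x^a0 y ... y x^a(r-1); identity on words without y.\<close>
definition push_word :: "word \<Rightarrow> word" where
  "push_word w =
     (if Y \<notin> set w then w
      else (let k = length (takeWhile (\<lambda>l. l = X) (rev w));
                w' = take (length w - k) w
            in replicate k X @ [Y] @ butlast w'))"

definition push_ser :: "series \<Rightarrow> series" where
  "push_ser f = (\<lambda>w. \<Sum>v\<in>{v. length v = length w \<and> push_word v = w}. f v)"

end

theory Submission
  imports Defs "HOL-Computational_Algebra.Polynomial"
begin

text \<open>
  Encode the part of a series made of words with n letters and r letters y by the polynomial
  \<open>poly_image n r\<close>, which sends x^a0 y x^a1 ... y x^ar to z0^a0 z1^a1 ... zr^ar. Distinct words
  give distinct monomials, so a series is determined by these polynomials; concatenation of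
  words becomes multiplication (with the variables of the right factor shifted), push becomes
  the cyclic rotation (z0, ..., zr) to (z1, ..., zr, z0), and C_a becomes (z0 - z1)^(a - 1).
  Hence the image of C_a1 ... C_ar is the product of the powers (z_(i-1) - z_i)^(a_i - 1), so
  for b in lie_C the polynomial \<open>poly_image n r b\<close> is the degree n - r part of ma(b) evaluated
  at the consecutive differences u_i = z_(i-1) - z_i. Rotating the z's replaces (u1, ..., ur)
  by (u2, ..., ur, -u1 - ... - ur), the inverse of the substitution in the definition of
  push-invariance of a mould.
\<close>

definition weak_comps :: "nat \<Rightarrow> nat \<Rightarrow> nat list set" where
  "weak_comps r d = {e. length e = r \<and> sum_list e = d}"

lemma finite_weak_comps: "finite (weak_comps r d)"
proof (rule finite_subset)
  show "weak_comps r d \<subseteq> {xs. set xs \<subseteq> {..d} \<and> length xs = r}"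
    by (auto simp: weak_comps_def member_le_sum_list)
qed (simp add: finite_lists_length_eq)

lemma weak_comps_0: "weak_comps 0 d = (if d = 0 then {[]} else {})"
  by (auto simp: weak_comps_def)

lemma weak_comps_Suc:
  "weak_comps (Suc r) d = (\<lambda>(j, e). j # e) ` (SIGMA j:{..d}. weak_comps r (d - j))"
  by (auto simp: weak_comps_def length_Suc_conv image_iff)

lemma sum_weak_comps_Suc:
  "(\<Sum>e\<in>weak_comps (Suc r) d. F e) = (\<Sum>j\<le>d. \<Sum>e\<in>weak_comps r (d - j). F (j # e))"
proof -
  have "inj_on (\<lambda>(j, e). j # e) (SIGMA j:{..d}. weak_comps r (d - j))"
    by (auto simp: inj_on_def)
  then have "(\<Sum>e\<in>weak_comps (Suc r) d. F e) = (\<Sum>(j, e)\<in>(SIGMA j:{..d}. weak_comps r (d - j)). F (j # e))"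
    unfolding weak_comps_Suc by (simp add: sum.reindex case_prod_unfold)
  also have "\<dots> = (\<Sum>j\<le>d. \<Sum>e\<in>weak_comps r (d - j). F (j # e))"
    by (rule sum.Sigma[symmetric]) (auto simp: finite_weak_comps)
  finally show ?thesis .
qed

lemma sum_atMost_delta2:
  fixes n r a b :: nat
  shows "(\<Sum>p\<le>n. \<Sum>q\<le>r. if p = a \<and> q = b then F p q else 0) = (if a \<le> n \<and> b \<le> r then F a b else 0)"
proof -
  have "(\<Sum>p\<le>n. \<Sum>q\<le>r. if p = a \<and> q = b then F p q else 0)
      = (\<Sum>p\<le>n. if p = a then (\<Sum>q\<le>r. if q = b then F a q else 0) else 0)"
    by (intro sum.cong) auto
  then show ?thesis
    by simp
qed

lemma count_list_take_drop: "count_list (take i w) a + count_list (drop i w) a = count_list w a"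
  by (metis append_take_drop_id count_list_append)

lemma coeff_eq_0_if_poly_vanishes:
  fixes c :: "nat \<Rightarrow> 'a::{idom,ring_char_0}"
  assumes "\<And>x. (\<Sum>j\<le>d. c j * x ^ j) = 0" and "j \<le> d"
  shows "c j = 0"
proof -
  let ?p = "\<Sum>i\<le>d. monom (c i) i"
  have "\<forall>x. poly ?p x = 0"
    using assms(1) by (simp add: poly_sum poly_monom)
  then have "?p = 0"
    by (simp add: poly_all_0_iff_0)
  then have "coeff ?p j = 0"
    by simp
  then show ?thesis
    using assms(2) by (simp add: coeff_sum)
qed

lemma coeff_eq_0_if_homogeneous_poly_vanishes:
  fixes c :: "nat list \<Rightarrow> 'a::{idom,ring_char_0}"
  assumes "\<And>u. length u = r \<Longrightarrow> (\<Sum>e\<in>weak_comps r d. c e * (\<Prod>i<r. (u ! i) ^ (e ! i))) = 0"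
    and "e \<in> weak_comps r d"
  shows "c e = 0"
  using assms
proof (induction r arbitrary: d c e)
  case 0
  then show ?case
    using "0.prems"(1)[of "[]"] by (auto simp: weak_comps_0 split: if_splits)
next
  case (Suc r)
  from Suc.prems(2) obtain j e' where e: "e = j # e'" and "j \<le> d" and e': "e' \<in> weak_comps r (d - j)"
    unfolding weak_comps_Suc by force
  define Q where "Q u j = (\<Sum>e\<in>weak_comps r (d - j). c (j # e) * (\<Prod>i<r. (u ! i) ^ (e ! i)))" for u j
  \<comment> \<open>Viewed as a polynomial in the first variable, the coefficients are polynomials in the others.\<close>
  have "Q u j = 0" if "length u = r" "j \<le> d" for u j
  proof (rule coeff_eq_0_if_poly_vanishes[OF _ \<open>j \<le> d\<close>])
    fix x
    have "(\<Sum>j\<le>d. Q u j * x ^ j) = (\<Sum>e\<in>weak_comps (Suc r) d. c e * (\<Prod>i<Suc r. ((x # u) ! i) ^ (e ! i)))"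
      by (simp add: sum_weak_comps_Suc prod.lessThan_Suc_shift Q_def sum_distrib_left
            sum_distrib_right algebra_simps del: prod.lessThan_Suc)
    also have "\<dots> = 0"
      using Suc.prems(1)[of "x # u"] that by simp
    finally show "(\<Sum>j\<le>d. Q u j * x ^ j) = 0" .
  qed
  then have "c (j # e') = 0"
    using Suc.IH[where d = "d - j" and c = "\<lambda>e. c (j # e)" and e = e'] \<open>j \<le> d\<close> e' by (simp add: Q_def)
  then show ?case
    by (simp add: e)
qed

section \<open>Polynomial images of series\<close>

definition words :: "nat \<Rightarrow> nat \<Rightarrow> word set" where
  "words n r = {w. length w = n \<and> count_list w Y = r}"

lemma finite_words: "finite (words n r)"
proof (rule finite_subset)
  show "words n r \<subseteq> {w. set w \<subseteq> {X, Y} \<and> length w = n}"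
    using letter.exhaust by (auto simp: words_def)
qed (simp add: finite_lists_length_eq)

lemma words_le: "w \<in> words n r \<Longrightarrow> r \<le> n"
  by (auto simp: words_def count_le_length)

fun word_monomial :: "word \<Rightarrow> (nat \<Rightarrow> 'a::comm_semiring_1) \<Rightarrow> 'a" where
  "word_monomial [] z = 1"
| "word_monomial (X # w) z = z 0 * word_monomial w z"
| "word_monomial (Y # w) z = word_monomial w (\<lambda>i. z (Suc i))"

lemma word_monomial_append:
  "word_monomial (u @ v) z = word_monomial u z * word_monomial v (\<lambda>i. z (i + count_list u Y))"
proof (induction u arbitrary: z)
  case (Cons l u)
  then show ?case by (cases l) (simp_all add: mult.assoc)
qed simp

definition poly_image :: "nat \<Rightarrow> nat \<Rightarrow> series \<Rightarrow> (nat \<Rightarrow> rat) \<Rightarrow> rat" where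
  "poly_image n r f z = (\<Sum>w\<in>words n r. f w * word_monomial w z)"

lemma poly_image_eq_0: "n < r \<Longrightarrow> poly_image n r f z = 0"
  using words_le[of _ n r] by (fastforce simp: poly_image_def intro: sum.neutral)

lemma poly_image_0: "poly_image n r (\<lambda>w. 0) = (\<lambda>z. 0)"
  by (simp add: poly_image_def fun_eq_iff)

lemma poly_image_add: "poly_image n r (\<lambda>w. f w + g w) = (\<lambda>z. poly_image n r f z + poly_image n r g z)"
  by (simp add: poly_image_def sum.distrib algebra_simps fun_eq_iff)

lemma poly_image_diff: "poly_image n r (\<lambda>w. f w - g w) = (\<lambda>z. poly_image n r f z - poly_image n r g z)"
  by (simp add: poly_image_def sum_subtractf algebra_simps fun_eq_iff)

lemma poly_image_scale: "poly_image n r (\<lambda>w. c * f w) = (\<lambda>z. c * poly_image n r f z)"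
  by (simp add: poly_image_def sum_distrib_left algebra_simps fun_eq_iff)

lemma bij_betw_append_words:
  assumes "i \<le> n" "q \<le> r"
  shows "bij_betw (\<lambda>(u, v). u @ v) (words i q \<times> words (n - i) (r - q))
           {w \<in> words n r. count_list (take i w) Y = q}"
proof (rule bij_betw_byWitness[where f' = "\<lambda>w. (take i w, drop i w)"])
  show "\<forall>x\<in>words i q \<times> words (n - i) (r - q). (\<lambda>w. (take i w, drop i w)) ((\<lambda>(u, v). u @ v) x) = x"
    by (auto simp: words_def)
  show "\<forall>w\<in>{w \<in> words n r. count_list (take i w) Y = q}. (\<lambda>(u, v). u @ v) (take i w, drop i w) = w"
    by simp
  show "(\<lambda>(u, v). u @ v) ` (words i q \<times> words (n - i) (r - q)) \<subseteq> {w \<in> words n r. count_list (take i w) Y = q}"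
    using assms by (auto simp: words_def)
  show "(\<lambda>w. (take i w, drop i w)) ` {w \<in> words n r. count_list (take i w) Y = q}
      \<subseteq> words i q \<times> words (n - i) (r - q)"
    using assms by (auto simp: words_def) (metis add_diff_cancel_left' count_list_take_drop)
qed

lemma poly_image_ser_mult:
  "poly_image n r (ser_mult f g) z =
     (\<Sum>p\<le>n. \<Sum>q\<le>r. poly_image p q f z * poly_image (n - p) (r - q) g (\<lambda>i. z (i + q)))"
proof -
  let ?t = "\<lambda>i w. f (take i w) * g (drop i w) * word_monomial w z"
  have "poly_image n r (ser_mult f g) z = (\<Sum>i\<le>n. \<Sum>w\<in>words n r. ?t i w)"
    by (subst sum.swap) (simp add: poly_image_def ser_mult_def words_def sum_distrib_right)
  also have "\<dots> = (\<Sum>i\<le>n. \<Sum>q\<le>r. \<Sum>w\<in>{w \<in> words n r. count_list (take i w) Y = q}. ?t i w)"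
  proof (intro sum.cong refl sum.group[symmetric])
    show "(\<lambda>w. count_list (take i w) Y) ` words n r \<subseteq> {..r}" for i
      by (auto simp: words_def) (metis count_list_take_drop le_add1)
  qed (simp_all add: finite_words)
  also have "\<dots> = (\<Sum>i\<le>n. \<Sum>q\<le>r. poly_image i q f z * poly_image (n - i) (r - q) g (\<lambda>j. z (j + q)))"
  proof (intro sum.cong refl)
    fix i q assume "i \<in> {..n}" "q \<in> {..r}"
    then have "(\<Sum>w\<in>{w \<in> words n r. count_list (take i w) Y = q}. ?t i w)
        = (\<Sum>(u, v)\<in>words i q \<times> words (n - i) (r - q). ?t i (u @ v))"
      by (simp add: sum.reindex_bij_betw[OF bij_betw_append_words, symmetric] case_prod_unfold)
    also have "\<dots> = (\<Sum>(u, v)\<in>words i q \<times> words (n - i) (r - q).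
        (f u * word_monomial u z) * (g v * word_monomial v (\<lambda>j. z (j + q))))"
      by (intro sum.cong refl) (auto simp: words_def word_monomial_append)
    also have "\<dots> = poly_image i q f z * poly_image (n - i) (r - q) g (\<lambda>j. z (j + q))"
      by (simp add: poly_image_def sum_product sum.cartesian_product)
    finally show "(\<Sum>w\<in>{w \<in> words n r. count_list (take i w) Y = q}. ?t i w)
        = poly_image i q f z * poly_image (n - i) (r - q) g (\<lambda>j. z (j + q))" .
  qed
  finally show ?thesis .
qed

fun word_of_exps :: "nat list \<Rightarrow> word" where
  "word_of_exps [] = []"
| "word_of_exps [a] = replicate a X"
| "word_of_exps (a # b # cs) = replicate a X @ Y # word_of_exps (b # cs)"

fun exps_of_word :: "word \<Rightarrow> nat list" where
  "exps_of_word [] = [0]"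
| "exps_of_word (X # w) = (case exps_of_word w of [] \<Rightarrow> [] | a # cs \<Rightarrow> Suc a # cs)"
| "exps_of_word (Y # w) = 0 # exps_of_word w"

lemma exps_of_word_ne: "exps_of_word w \<noteq> []"
  by (induction w rule: exps_of_word.induct) (auto split: list.split)

lemma length_exps_of_word: "length (exps_of_word w) = Suc (count_list w Y)"
  by (induction w rule: exps_of_word.induct) (auto split: list.split)

lemma sum_list_exps_of_word: "sum_list (exps_of_word w) = length w - count_list w Y"
proof (induction w rule: exps_of_word.induct)
  case (2 w)
  then show ?case
    using exps_of_word_ne[of w] count_le_length[of w Y] by (auto split: list.split)
qed (auto simp: count_le_length)

lemma word_of_exps_Cons: "cs \<noteq> [] \<Longrightarrow> word_of_exps (a # cs) = replicate a X @ Y # word_of_exps cs"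
  by (cases cs) auto

lemma word_of_exps_snoc: "cs \<noteq> [] \<Longrightarrow> word_of_exps (cs @ [a]) = word_of_exps cs @ Y # replicate a X"
  by (induction cs rule: word_of_exps.induct) (auto simp: word_of_exps_Cons)

lemma word_of_exps_Suc: "word_of_exps (Suc a # cs) = X # word_of_exps (a # cs)"
  by (cases cs) auto

lemma word_of_exps_exps_of_word: "word_of_exps (exps_of_word w) = w"
proof (induction w rule: exps_of_word.induct)
  case (2 w)
  then show ?case
    using exps_of_word_ne[of w] by (cases "exps_of_word w") (auto simp: word_of_exps_Suc)
next
  case (3 w)
  then show ?case
    using exps_of_word_ne[of w] by (simp add: word_of_exps_Cons)
qed simp

lemma exps_of_word_replicate_append:
  "exps_of_word (replicate a X @ w) = (case exps_of_word w of [] \<Rightarrow> [] | c # cs \<Rightarrow> (c + a) # cs)"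
  by (induction a) (auto split: list.split)

lemma exps_of_word_word_of_exps: "e \<noteq> [] \<Longrightarrow> exps_of_word (word_of_exps e) = e"
proof (induction e rule: word_of_exps.induct)
  case (2 a)
  then show ?case
    using exps_of_word_replicate_append[of a "[]"] by simp
qed (simp_all add: exps_of_word_replicate_append)

lemma length_word_of_exps: "length (word_of_exps e) = sum_list e + (length e - 1)"
  by (induction e rule: word_of_exps.induct) auto

lemma count_word_of_exps: "count_list (word_of_exps e) Y = length e - 1"
  by (induction e rule: word_of_exps.induct) auto

lemma word_monomial_replicate_append:
  "word_monomial (replicate a X @ w) z = z 0 ^ a * word_monomial w z"
  by (induction a) (simp_all add: mult.assoc)

lemma word_monomial_word_of_exps:
  "word_monomial (word_of_exps e) z = (\<Prod>i<length e. z i ^ (e ! i))"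
proof (induction e arbitrary: z rule: word_of_exps.induct)
  case (2 a)
  then show ?case
    using word_monomial_replicate_append[of a "[]" z] by simp
next
  case (3 a b cs)
  then show ?case
    by (simp add: word_monomial_replicate_append prod.lessThan_Suc_shift del: prod.lessThan_Suc)
qed simp

lemma bij_betw_word_of_exps:
  assumes "r \<le> n"
  shows "bij_betw word_of_exps (weak_comps (Suc r) (n - r)) (words n r)"
proof (rule bij_betw_byWitness[where f' = exps_of_word])
  show "\<forall>e\<in>weak_comps (Suc r) (n - r). exps_of_word (word_of_exps e) = e"
    by (auto simp: weak_comps_def intro!: exps_of_word_word_of_exps)
  show "\<forall>w\<in>words n r. word_of_exps (exps_of_word w) = w"
    by (simp add: word_of_exps_exps_of_word)
  show "word_of_exps ` weak_comps (Suc r) (n - r) \<subseteq> words n r"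
    using assms by (auto simp: weak_comps_def words_def length_word_of_exps count_word_of_exps)
  show "exps_of_word ` words n r \<subseteq> weak_comps (Suc r) (n - r)"
    by (auto simp: weak_comps_def words_def length_exps_of_word sum_list_exps_of_word)
qed

lemma poly_image_eq_sum_weak_comps:
  assumes "r \<le> n"
  shows "poly_image n r f z =
           (\<Sum>e\<in>weak_comps (Suc r) (n - r). f (word_of_exps e) * (\<Prod>i<Suc r. z i ^ (e ! i)))"
  unfolding poly_image_def sum.reindex_bij_betw[OF bij_betw_word_of_exps[OF assms], symmetric]
  by (intro sum.cong refl) (auto simp: weak_comps_def word_monomial_word_of_exps)

lemma series_eqI_poly_image:
  assumes "\<And>n r z. poly_image n r f z = poly_image n r g z"
  shows "f = g"
proof
  fix w
  let ?n = "length w" and ?r = "count_list w Y"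
  have r: "?r \<le> ?n"
    by (rule count_le_length)
  have "(\<lambda>e. f (word_of_exps e) - g (word_of_exps e)) (exps_of_word w) = 0"
  proof (rule coeff_eq_0_if_homogeneous_poly_vanishes)
    fix u :: "rat list"
    assume "length u = Suc ?r"
    have "poly_image ?n ?r (\<lambda>w. f w - g w) (\<lambda>i. u ! i) = 0"
      by (simp add: poly_image_diff assms)
    then show "(\<Sum>e\<in>weak_comps (Suc ?r) (?n - ?r).
        (f (word_of_exps e) - g (word_of_exps e)) * (\<Prod>i<Suc ?r. (u ! i) ^ (e ! i))) = 0"
      by (simp add: poly_image_eq_sum_weak_comps[OF r])
  next
    show "exps_of_word w \<in> weak_comps (Suc ?r) (?n - ?r)"
      by (simp add: weak_comps_def length_exps_of_word sum_list_exps_of_word)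
  qed
  then show "f w = g w"
    by (simp add: word_of_exps_exps_of_word)
qed

section \<open>Push as a rotation of the variables\<close>

lemma push_word_word_of_exps:
  assumes "cs \<noteq> []"
  shows "push_word (word_of_exps (cs @ [a])) = word_of_exps (a # cs)"
proof -
  have "takeWhile (\<lambda>l. l = X) (replicate a X @ Y # w) = replicate a X" for w
    by (induction a) auto
  then show ?thesis
    using assms by (simp add: push_word_def word_of_exps_snoc word_of_exps_Cons Let_def)
qed

lemma push_word_cases:
  obtains "Y \<notin> set v" "push_word v = v"
  | cs a where "cs \<noteq> []" "v = word_of_exps (cs @ [a])" "push_word v = word_of_exps (a # cs)"
proof (cases "Y \<in> set v")
  case True
  define e where "e = exps_of_word v"
  have "length e = Suc (count_list v Y)" "count_list v Y \<noteq> 0"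
    using True by (simp_all add: e_def length_exps_of_word count_list_0_iff)
  then have "butlast e \<noteq> []" "e = butlast e @ [last e]"
    by (metis diff_Suc_1 length_butlast length_0_conv, metis Zero_not_Suc append_butlast_last_id list.size(3))
  moreover have "v = word_of_exps e"
    by (simp add: e_def word_of_exps_exps_of_word)
  ultimately show ?thesis
    using that(2) push_word_word_of_exps by metis
qed (simp add: push_word_def)

definition rotate_vars :: "nat \<Rightarrow> (nat \<Rightarrow> 'a) \<Rightarrow> nat \<Rightarrow> 'a" where
  "rotate_vars r z i = (if i < r then z (Suc i) else if i = r then z 0 else z i)"

lemma rotate_vars_0 [simp]: "rotate_vars 0 z = z"
  by (auto simp: rotate_vars_def)

lemma push_word_in_words_iff [simp]: "push_word v \<in> words n r \<longleftrightarrow> v \<in> words n r"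
  by (cases v rule: push_word_cases)
    (auto simp: words_def length_word_of_exps count_word_of_exps)

lemma word_monomial_push_word:
  "word_monomial (push_word v) z = word_monomial v (rotate_vars (count_list v Y) z)"
proof (cases v rule: push_word_cases)
  case 1
  then show ?thesis
    by (simp add: count_list_0_iff)
next
  case (2 cs a)
  let ?r = "length cs"
  have "word_monomial (push_word v) z = z 0 ^ a * (\<Prod>i<?r. z (Suc i) ^ (cs ! i))"
    using 2 by (simp add: word_monomial_word_of_exps prod.lessThan_Suc_shift del: prod.lessThan_Suc)
  also have "\<dots> = (\<Prod>i<?r. rotate_vars ?r z i ^ ((cs @ [a]) ! i)) * rotate_vars ?r z ?r ^ a"
    by (simp add: rotate_vars_def nth_append mult.commute)
  also have "\<dots> = word_monomial v (rotate_vars (count_list v Y) z)"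
    using 2 by (simp add: word_monomial_word_of_exps count_word_of_exps)
  finally show ?thesis .
qed

lemma poly_image_push_ser: "poly_image n r (push_ser f) z = poly_image n r f (rotate_vars r z)"
proof -
  have fiber: "{v. length v = length w \<and> push_word v = w} = {v \<in> words n r. push_word v = w}"
    if "w \<in> words n r" for w
    using that push_word_in_words_iff[of _ n r] by (auto simp: words_def)
  have "poly_image n r (push_ser f) z =
      (\<Sum>w\<in>words n r. \<Sum>v\<in>{v \<in> words n r. push_word v = w}. f v * word_monomial (push_word v) z)"
    unfolding poly_image_def push_ser_def by (intro sum.cong refl) (simp add: fiber sum_distrib_right)
  also have "\<dots> = (\<Sum>v\<in>words n r. f v * word_monomial (push_word v) z)"
    by (rule sum.group[OF finite_words finite_words]) auto
  also have "\<dots> = poly_image n r f (rotate_vars r z)"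
    unfolding poly_image_def by (intro sum.cong refl) (simp add: words_def word_monomial_push_word)
  finally show ?thesis .
qed

section \<open>Images of the generators\<close>

lemma poly_image_letter:
  "poly_image n r (ser_letter l) z = (if [l] \<in> words n r then word_monomial [l] z else 0)"
  by (simp add: poly_image_def ser_letter_def if_distrib[where f = "\<lambda>c. c * _"] finite_words
      cong: if_cong)

lemma poly_image_X: "poly_image n r (ser_letter X) z = (if n = 1 \<and> r = 0 then z 0 else 0)"
  by (auto simp: poly_image_letter words_def)

lemma poly_image_Y: "poly_image n r (ser_letter Y) z = (if n = 1 \<and> r = 1 then 1 else 0)"
  by (auto simp: poly_image_letter words_def)

lemma poly_image_X_mult:
  "poly_image n r (ser_mult (ser_letter X) g) z = (if 1 \<le> n then z 0 * poly_image (n - 1) r g z else 0)"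
  by (simp add: poly_image_ser_mult poly_image_X if_distrib[where f = "\<lambda>c. c * _"] sum_atMost_delta2
      cong: if_cong)

lemma poly_image_mult_X:
  "poly_image n r (ser_mult g (ser_letter X)) z = (if 1 \<le> n then poly_image (n - 1) r g z * z r else 0)"
proof -
  have "poly_image n r (ser_mult g (ser_letter X)) z =
      (\<Sum>p\<le>n. \<Sum>q\<le>r. if p = n - 1 \<and> q = r then (if 1 \<le> n then poly_image p q g z * z q else 0) else 0)"
    unfolding poly_image_ser_mult poly_image_X by (intro sum.cong refl) auto
  then show ?thesis
    by (simp add: sum_atMost_delta2)
qed

lemma poly_image_adxy:
  "poly_image n r (adxy m) z = (if n = Suc m \<and> r = 1 then (z 0 - z 1) ^ m else 0)"
proof (induction m arbitrary: n r)
  case 0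
  then show ?case
    by (simp add: poly_image_Y)
next
  case (Suc m)
  have eq: "poly_image n r (adxy (Suc m)) z =
      (if 1 \<le> n then z 0 * poly_image (n - 1) r (adxy m) z - poly_image (n - 1) r (adxy m) z * z r else 0)"
    by (simp add: bracket_def poly_image_diff poly_image_X_mult poly_image_mult_X)
  show ?case
    unfolding eq by (auto simp: Suc.IH algebra_simps)
qed

lemma poly_image_C:
  "1 \<le> a \<Longrightarrow> poly_image n r (C a) z = (if n = a \<and> r = 1 then (z 0 - z 1) ^ (a - 1) else 0)"
  by (auto simp: C_def poly_image_adxy)

lemma poly_image_one: "poly_image n r ser_one z = (if n = 0 \<and> r = 0 then 1 else 0)"
  by (simp add: poly_image_def ser_one_def if_distrib[where f = "\<lambda>c. c * _"] finite_words
      cong: if_cong) (auto simp: words_def)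

fun diff_monomial :: "nat list \<Rightarrow> (nat \<Rightarrow> 'a::comm_ring_1) \<Rightarrow> 'a" where
  "diff_monomial [] z = 1"
| "diff_monomial (a # e) z = (z 0 - z 1) ^ a * diff_monomial e (\<lambda>i. z (Suc i))"

lemma diff_monomial_append:
  "diff_monomial (e @ e') z = diff_monomial e z * diff_monomial e' (\<lambda>i. z (i + length e))"
  by (induction e arbitrary: z) auto

lemma diff_monomial_eq_prod: "diff_monomial e z = (\<Prod>i<length e. (z i - z (Suc i)) ^ (e ! i))"
  by (induction e arbitrary: z) (auto simp: prod.lessThan_Suc_shift simp del: prod.lessThan_Suc)

lemma poly_image_Cprod:
  assumes "\<forall>a\<in>set as. 1 \<le> a"
  shows "poly_image n r (Cprod as) z =
           (if length as = r \<and> sum_list as = n then diff_monomial (map (\<lambda>a. a - 1) as) z else 0)"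
  using assms
proof (induction as arbitrary: n r z)
  case Nil
  then show ?case
    by (simp add: Cprod_def poly_image_one)
next
  case (Cons a as)
  have "poly_image n r (Cprod (a # as)) z
      = (if a \<le> n \<and> 1 \<le> r then (z 0 - z 1) ^ (a - 1) * poly_image (n - a) (r - 1) (Cprod as) (\<lambda>i. z (Suc i))
         else 0)"
    using Cons.prems by (simp add: Cprod_def poly_image_ser_mult poly_image_C
        if_distrib[where f = "\<lambda>c. c * _"] sum_atMost_delta2 cong: if_cong)
  then show ?case
    using Cons by auto
qed

section \<open>Expansion in the C_i\<close>

definition diff_poly :: "nat \<Rightarrow> nat \<Rightarrow> ((nat \<Rightarrow> rat) \<Rightarrow> rat) \<Rightarrow> bool" where
  "diff_poly r d F \<longleftrightarrow> (\<exists>c. \<forall>z. F z = (\<Sum>e\<in>weak_comps r d. c e * diff_monomial e z))"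

lemma diff_poly_0: "diff_poly r d (\<lambda>z. 0)"
  unfolding diff_poly_def by (rule exI[of _ "\<lambda>_. 0"]) simp

lemma diff_poly_add:
  assumes "diff_poly r d F" "diff_poly r d G"
  shows "diff_poly r d (\<lambda>z. F z + G z)"
proof -
  obtain c c' where "\<And>z. F z = (\<Sum>e\<in>weak_comps r d. c e * diff_monomial e z)"
    and "\<And>z. G z = (\<Sum>e\<in>weak_comps r d. c' e * diff_monomial e z)"
    using assms by (auto simp: diff_poly_def)
  then show ?thesis
    unfolding diff_poly_def by (intro exI[of _ "\<lambda>e. c e + c' e"]) (simp add: sum.distrib algebra_simps)
qed

lemma diff_poly_scale:
  assumes "diff_poly r d F"
  shows "diff_poly r d (\<lambda>z. a * F z)"
proof -
  obtain c where "\<And>z. F z = (\<Sum>e\<in>weak_comps r d. c e * diff_monomial e z)"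
    using assms by (auto simp: diff_poly_def)
  then show ?thesis
    unfolding diff_poly_def by (intro exI[of _ "\<lambda>e. a * c e"]) (simp add: sum_distrib_left algebra_simps)
qed

lemma diff_poly_diff: "diff_poly r d F \<Longrightarrow> diff_poly r d G \<Longrightarrow> diff_poly r d (\<lambda>z. F z - G z)"
  using diff_poly_add[of r d F "\<lambda>z. (-1) * G z"] diff_poly_scale[of r d G "-1"] by simp

lemma diff_poly_sum:
  "finite I \<Longrightarrow> (\<And>i. i \<in> I \<Longrightarrow> diff_poly r d (F i)) \<Longrightarrow> diff_poly r d (\<lambda>z. \<Sum>i\<in>I. F i z)"
  by (induction I rule: finite_induct) (simp_all add: diff_poly_0 diff_poly_add)

lemma diff_poly_mult:
  assumes "diff_poly q d F" "diff_poly s d' G"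
  shows "diff_poly (q + s) (d + d') (\<lambda>z. F z * G (\<lambda>i. z (i + q)))"
proof -
  obtain c where c: "\<And>z. F z = (\<Sum>e\<in>weak_comps q d. c e * diff_monomial e z)"
    using assms(1) by (auto simp: diff_poly_def)
  obtain c' where c': "\<And>z. G z = (\<Sum>e\<in>weak_comps s d'. c' e * diff_monomial e z)"
    using assms(2) by (auto simp: diff_poly_def)
  let ?P = "weak_comps q d \<times> weak_comps s d'"
  let ?S = "(\<lambda>(e, e'). e @ e') ` ?P"
  have inj: "inj_on (\<lambda>(e, e'). e @ e') ?P"
    by (auto simp: inj_on_def weak_comps_def)
  define cc where "cc e = (if e \<in> ?S then c (take q e) * c' (drop q e) else 0)" for e
  have "F z * G (\<lambda>i. z (i + q)) = (\<Sum>e\<in>weak_comps (q + s) (d + d'). cc e * diff_monomial e z)" for z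
  proof -
    have "F z * G (\<lambda>i. z (i + q)) =
        (\<Sum>(e, e')\<in>?P. (c e * diff_monomial e z) * (c' e' * diff_monomial e' (\<lambda>i. z (i + q))))"
      by (simp add: c c' sum_product sum.cartesian_product)
    also have "\<dots> = (\<Sum>(e, e')\<in>?P. cc (e @ e') * diff_monomial (e @ e') z)"
      by (intro sum.cong refl) (auto simp: cc_def diff_monomial_append weak_comps_def)
    also have "\<dots> = (\<Sum>e\<in>?S. cc e * diff_monomial e z)"
      by (subst sum.reindex[OF inj]) (simp add: case_prod_unfold)
    also have "\<dots> = (\<Sum>e\<in>weak_comps (q + s) (d + d'). cc e * diff_monomial e z)"
      by (rule sum.mono_neutral_left[OF finite_weak_comps]) (auto simp: cc_def weak_comps_def)
    finally show ?thesis .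
  qed
  then show ?thesis
    unfolding diff_poly_def by blast
qed

definition diff_poly_series :: "series \<Rightarrow> bool" where
  "diff_poly_series f \<longleftrightarrow> (\<forall>n r. diff_poly r (n - r) (poly_image n r f))"

lemma diff_poly_series_ser_mult:
  assumes "diff_poly_series f" "diff_poly_series g"
  shows "diff_poly_series (ser_mult f g)"
  unfolding diff_poly_series_def
proof (intro allI)
  fix n r
  have "diff_poly r (n - r) (\<lambda>z. poly_image p q f z * poly_image (n - p) (r - q) g (\<lambda>i. z (i + q)))"
    if "p \<le> n" "q \<le> r" for p q
  proof (cases "q \<le> p \<and> r - q \<le> n - p")
    case True
    have "diff_poly (q + (r - q)) ((p - q) + (n - p - (r - q)))
        (\<lambda>z. poly_image p q f z * poly_image (n - p) (r - q) g (\<lambda>i. z (i + q)))"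
      using assms unfolding diff_poly_series_def by (blast intro: diff_poly_mult)
    moreover have "q + (r - q) = r" "(p - q) + (n - p - (r - q)) = n - r"
      using True that by auto
    ultimately show ?thesis
      by simp
  next
    case False
    then show ?thesis
      by (auto simp: poly_image_eq_0 diff_poly_0)
  qed
  then show "diff_poly r (n - r) (poly_image n r (ser_mult f g))"
    unfolding poly_image_ser_mult by (auto intro!: diff_poly_sum)
qed

lemma diff_poly_series_lie_poly: "a \<in> lie_poly \<Longrightarrow> diff_poly_series a"
proof (induction rule: lie_poly.induct)
  case (gen i)
  have "weak_comps 1 d = {[d]}" for d
    by (auto simp: weak_comps_def length_Suc_conv)
  then have "diff_poly 1 d (\<lambda>z. (z 0 - z 1) ^ d)" for d
    unfolding diff_poly_def by (intro exI[of _ "\<lambda>_. 1"]) simp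
  moreover have "poly_image n r (C i) = (if n = i \<and> r = 1 then (\<lambda>z. (z 0 - z 1) ^ (n - r)) else (\<lambda>z. 0))"
    for n r
    using gen by (auto simp: poly_image_C)
  ultimately show ?case
    by (simp add: diff_poly_series_def diff_poly_0)
next
  case zero
  then show ?case
    by (simp add: diff_poly_series_def ser_zero_def poly_image_0 diff_poly_0)
next
  case (add a b)
  then show ?case
    by (simp add: diff_poly_series_def ser_add_def poly_image_add diff_poly_add)
next
  case (scale a c)
  then show ?case
    by (simp add: diff_poly_series_def ser_scale_def poly_image_scale diff_poly_scale)
next
  case (brk a b)
  then show ?case
    using diff_poly_series_ser_mult[of a b] diff_poly_series_ser_mult[of b a]
    by (simp add: diff_poly_series_def bracket_def poly_image_diff diff_poly_diff)
qed

lemma diff_poly_series_lie_C: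
  assumes "b \<in> lie_C"
  shows "diff_poly_series b"
proof -
  have "poly_image n r b = poly_image n r (hom n b)" for n r
    by (auto simp: poly_image_def hom_def words_def intro!: sum.cong)
  then show ?thesis
    using assms diff_poly_series_lie_poly by (auto simp: lie_C_def diff_poly_series_def)
qed

lemma length_le_sum_list: "\<forall>a\<in>set as. 1 \<le> a \<Longrightarrow> length as \<le> sum_list as"
  by (induction as) auto

lemma finite_compositions: "finite (compositions n)"
proof (rule finite_subset)
  show "compositions n \<subseteq> {as. set as \<subseteq> {..n} \<and> length as \<le> n}"
    by (auto simp: compositions_def member_le_sum_list length_le_sum_list)
qed (simp add: finite_lists_length_le)

lemma compositions_of_length:
  assumes "r \<le> n"
  shows "{as \<in> compositions n. length as = r} = map Suc ` weak_comps r (n - r)"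
proof (intro equalityI subsetI)
  fix as
  assume "as \<in> {as \<in> compositions n. length as = r}"
  then have pos: "\<forall>a\<in>set as. 1 \<le> a" and "sum_list as = n" "length as = r"
    by (simp_all add: compositions_def)
  have as_eq: "map (\<lambda>a. Suc (a - 1)) as = as"
    by (rule map_idI) (use pos in auto)
  then have "sum_list (map (\<lambda>a. a - 1) as) + r = n"
    using sum_list_Suc[of "\<lambda>a. a - 1" as] \<open>sum_list as = n\<close> \<open>length as = r\<close> by simp
  then have "map (\<lambda>a. a - 1) as \<in> weak_comps r (n - r)"
    using \<open>length as = r\<close> by (simp add: weak_comps_def)
  moreover have "as = map Suc (map (\<lambda>a. a - 1) as)"
    using as_eq by (simp add: comp_def)
  ultimately show "as \<in> map Suc ` weak_comps r (n - r)"
    by blast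
qed (use assms in \<open>auto simp: compositions_def weak_comps_def sum_list_Suc\<close>)

lemma poly_image_series_of_coeffs:
  assumes "r \<le> n"
  shows "poly_image n r (series_of_coeffs k) z =
           (\<Sum>e\<in>weak_comps r (n - r). k (map Suc e) * diff_monomial e z)"
proof -
  have "poly_image n r (series_of_coeffs k) z = (\<Sum>as\<in>compositions n. k as * poly_image n r (Cprod as) z)"
    unfolding poly_image_def series_of_coeffs_def
    by (simp add: words_def sum_distrib_left sum_distrib_right algebra_simps sum.swap[where A = "compositions _"])
  also have "\<dots> = (\<Sum>as\<in>compositions n.
      if length as = r then k as * diff_monomial (map (\<lambda>a. a - 1) as) z else 0)"
    by (intro sum.cong refl) (auto simp: compositions_def poly_image_Cprod)
  also have "\<dots> = (\<Sum>as\<in>{as \<in> compositions n. length as = r}. k as * diff_monomial (map (\<lambda>a. a - 1) as) z)"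
    by (rule sum.inter_filter[OF finite_compositions, symmetric])
  also have "\<dots> = (\<Sum>e\<in>weak_comps r (n - r). k (map Suc e) * diff_monomial e z)"
    unfolding compositions_of_length[OF assms] by (subst sum.reindex) (auto simp: inj_on_def comp_def)
  finally show ?thesis .
qed

definition consec_diffs :: "nat \<Rightarrow> (nat \<Rightarrow> 'a::ab_group_add) \<Rightarrow> 'a list" where
  "consec_diffs r z = map (\<lambda>i. z i - z (Suc i)) [0..<r]"

lemma length_consec_diffs [simp]: "length (consec_diffs r z) = r"
  by (simp add: consec_diffs_def)

lemma nth_consec_diffs: "i < r \<Longrightarrow> consec_diffs r z ! i = z i - z (Suc i)"
  by (simp add: consec_diffs_def)

lemma consec_diffs_partial_sums: "length u = r \<Longrightarrow> consec_diffs r (\<lambda>i. sum_list (drop i u)) = u"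
  by (rule nth_equalityI) (auto simp: nth_consec_diffs Cons_nth_drop_Suc[symmetric])

lemma sum_list_consec_diffs: "sum_list (consec_diffs r z) = z 0 - z r"
  by (induction r) (auto simp: consec_diffs_def)

lemma consec_diffs_rotate_vars:
  assumes "1 \<le> r"
  shows "consec_diffs r (rotate_vars r z) = tl (consec_diffs r z) @ [- sum_list (consec_diffs r z)]"
proof (rule nth_equalityI)
  fix i
  assume "i < length (consec_diffs r (rotate_vars r z))"
  then consider "i < r - 1" | "i = r - 1"
    by fastforce
  then show "consec_diffs r (rotate_vars r z) ! i = (tl (consec_diffs r z) @ [- sum_list (consec_diffs r z)]) ! i"
  proof cases
    case 1
    then have "Suc i < r"
      by linarith
    with 1 show ?thesis
      by (simp add: nth_consec_diffs nth_append nth_tl rotate_vars_def)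
  next
    case 2
    with assms show ?thesis
      by (simp add: nth_consec_diffs nth_append rotate_vars_def sum_list_consec_diffs)
  qed
qed (use assms in simp)

lemma diff_monomial_coeffs_eq_0:
  fixes c :: "nat list \<Rightarrow> 'a::{idom,ring_char_0}"
  assumes "\<And>z. (\<Sum>e\<in>weak_comps r d. c e * diff_monomial e z) = 0" and "e \<in> weak_comps r d"
  shows "c e = 0"
proof (rule coeff_eq_0_if_homogeneous_poly_vanishes[OF _ assms(2)])
  fix u :: "'a list"
  assume u: "length u = r"
  have "(\<Sum>e\<in>weak_comps r d. c e * (\<Prod>i<r. (u ! i) ^ (e ! i))) =
      (\<Sum>e\<in>weak_comps r d. c e * diff_monomial e (\<lambda>i. sum_list (drop i u)))"
    using u by (intro sum.cong refl) (simp add: diff_monomial_eq_prod weak_comps_def Cons_nth_drop_Suc[symmetric])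
  then show "(\<Sum>e\<in>weak_comps r d. c e * (\<Prod>i<r. (u ! i) ^ (e ! i))) = 0"
    using assms(1) by simp
qed

lemma series_of_coeffs_inject:
  assumes "valid_coeffs k" "valid_coeffs k'" "series_of_coeffs k = series_of_coeffs k'"
  shows "k = k'"
proof
  fix as
  show "k as = k' as"
  proof (cases "\<forall>a\<in>set as. 1 \<le> a")
    case False
    then have "\<exists>a\<in>set as. a = 0"
      by (auto simp: not_le)
    then show ?thesis
      using assms(1,2) by (simp add: valid_coeffs_def)
  next
    case True
    define e where "e = map (\<lambda>a. a - 1) as"
    have as: "as = map Suc e"
      using True by (auto simp: e_def intro!: map_idI[symmetric])
    let ?r = "length e" and ?n = "sum_list e + length e"
    have "(\<Sum>e\<in>weak_comps ?r (?n - ?r). (k (map Suc e) - k' (map Suc e)) * diff_monomial e z) = 0" for z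
      using assms(3) poly_image_series_of_coeffs[of ?r ?n k z] poly_image_series_of_coeffs[of ?r ?n k' z]
      by (simp add: algebra_simps sum_subtractf)
    from diff_monomial_coeffs_eq_0[OF this] show ?thesis
      by (simp add: as weak_comps_def)
  qed
qed

lemma series_of_coeffs_exists:
  assumes "diff_poly_series f"
  obtains k where "valid_coeffs k" "series_of_coeffs k = f"
proof -
  obtain c where c: "\<And>n r z. poly_image n r f z = (\<Sum>e\<in>weak_comps r (n - r). c n r e * diff_monomial e z)"
    using assms unfolding diff_poly_series_def diff_poly_def by metis
  define k where "k as = (if \<forall>a\<in>set as. 1 \<le> a then c (sum_list as) (length as) (map (\<lambda>a. a - 1) as) else 0)"
    for as
  have "valid_coeffs k"
    by (auto simp: valid_coeffs_def k_def)
  moreover have "series_of_coeffs k = f"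
  proof (rule series_eqI_poly_image)
    fix n r z
    show "poly_image n r (series_of_coeffs k) z = poly_image n r f z"
    proof (cases "r \<le> n")
      case True
      then show ?thesis
        by (auto simp: poly_image_series_of_coeffs c k_def weak_comps_def sum_list_Suc comp_def
            intro!: sum.cong)
    qed (simp add: poly_image_eq_0)
  qed
  ultimately show ?thesis
    using that by blast
qed

lemma series_of_coeffs_C_coeffs:
  assumes "b \<in> lie_C"
  shows "series_of_coeffs (C_coeffs b) = b"
proof -
  obtain k where "valid_coeffs k" "series_of_coeffs k = b"
    using series_of_coeffs_exists[OF diff_poly_series_lie_C[OF assms]] .
  then have "\<exists>!k. valid_coeffs k \<and> series_of_coeffs k = b"
    using series_of_coeffs_inject by blast
  then show ?thesis
    unfolding C_coeffs_def by (rule theI'[THEN conjunct2])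
qed

section \<open>Moulds\<close>

lemma poly_image_lie_C:
  assumes "b \<in> lie_C" "r \<le> n"
  shows "poly_image n r b z = hom_eval (ma b) r (n - r) (consec_diffs r z)"
proof -
  have "poly_image n r b z = (\<Sum>e\<in>weak_comps r (n - r). C_coeffs b (map Suc e) * diff_monomial e z)"
    using poly_image_series_of_coeffs[OF assms(2), of "C_coeffs b"]
    by (simp add: series_of_coeffs_C_coeffs[OF assms(1)])
  also have "\<dots> = (\<Sum>e\<in>weak_comps r (n - r). ma b r e * (\<Prod>i<r. (consec_diffs r z ! i) ^ (e ! i)))"
  proof (intro sum.cong refl)
    fix e
    assume "e \<in> weak_comps r (n - r)"
    then have "length e = r"
      by (simp add: weak_comps_def)
    then show "C_coeffs b (map Suc e) * diff_monomial e z = ma b r e * (\<Prod>i<r. (consec_diffs r z ! i) ^ (e ! i))"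
      by (simp add: ma_def diff_monomial_eq_prod nth_consec_diffs)
  qed
  also have "\<dots> = hom_eval (ma b) r (n - r) (consec_diffs r z)"
    by (simp add: hom_eval_def weak_comps_def)
  finally show ?thesis .
qed

lemma push_ser_eq_iff:
  "push_ser f = f \<longleftrightarrow> (\<forall>n r z. poly_image n r f (rotate_vars r z) = poly_image n r f z)"
  by (metis poly_image_push_ser series_eqI_poly_image)

lemma push_invariant_mould_iff:
  "push_invariant_mould A \<longleftrightarrow>
     (\<forall>r\<ge>1. \<forall>d. \<forall>u::rat list. length u = r \<longrightarrow>
        hom_eval A r d (tl u @ [- sum_list u]) = hom_eval A r d u)"
proof -
  have inv1: "tl v @ [- sum_list v] = u" if "v = (- sum_list u) # butlast u" "u \<noteq> []" for u v :: "rat list"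
  proof -
    have "sum_list u = sum_list (butlast u) + last u"
      using \<open>u \<noteq> []\<close> by (induction u rule: rev_induct) auto
    then show ?thesis
      using that by simp
  qed
  have inv2: "(- sum_list v) # butlast v = u" if "v = tl u @ [- sum_list u]" "u \<noteq> []" for u v :: "rat list"
    using that by (cases u) (auto simp: algebra_simps)
  show ?thesis
    unfolding push_invariant_mould_def
  proof (intro iffI allI impI)
    fix r d and u :: "rat list"
    assume inv: "\<forall>r\<ge>1. \<forall>d u. length u = r \<longrightarrow> hom_eval A r d ((- sum_list u) # butlast u) = hom_eval A r d u"
      and "1 \<le> r" "length u = r"
    define v where "v = tl u @ [- sum_list u]"
    have "length v = r" "u \<noteq> []"
      using \<open>1 \<le> r\<close> \<open>length u = r\<close> by (auto simp: v_def)
    then have "hom_eval A r d v = hom_eval A r d u"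
      using inv[rule_format, of r v d] \<open>1 \<le> r\<close> inv2[OF v_def] by simp
    then show "hom_eval A r d (tl u @ [- sum_list u]) = hom_eval A r d u"
      by (simp add: v_def)
  next
    fix r d and u :: "rat list"
    assume inv: "\<forall>r\<ge>1. \<forall>d u. length u = r \<longrightarrow> hom_eval A r d (tl u @ [- sum_list u]) = hom_eval A r d u"
      and "1 \<le> r" "length u = r"
    define v where "v = (- sum_list u) # butlast u"
    have "length v = r" "u \<noteq> []"
      using \<open>1 \<le> r\<close> \<open>length u = r\<close> by (auto simp: v_def)
    then have "hom_eval A r d v = hom_eval A r d u"
      using inv[rule_format, of r v d] \<open>1 \<le> r\<close> inv1[OF v_def] by simp
    then show "hom_eval A r d ((- sum_list u) # butlast u) = hom_eval A r d u"
      by (simp add: v_def)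
  qed
qed

lemma lie_C_rotation_invariant_iff:
  assumes "b \<in> lie_C"
  shows "(\<forall>n r z. poly_image n r b (rotate_vars r z) = poly_image n r b z) \<longleftrightarrow>
         (\<forall>r\<ge>1. \<forall>d. \<forall>u::rat list. length u = r \<longrightarrow>
            hom_eval (ma b) r d (tl u @ [- sum_list u]) = hom_eval (ma b) r d u)"
proof (intro iffI allI impI)
  fix r d and u :: "rat list"
  assume rot: "\<forall>n r z. poly_image n r b (rotate_vars r z) = poly_image n r b z"
    and "1 \<le> r" "length u = r"
  define z where "z = (\<lambda>i. sum_list (drop i u))"
  have z: "consec_diffs r z = u"
    unfolding z_def using \<open>length u = r\<close> by (rule consec_diffs_partial_sums)
  have "hom_eval (ma b) r d (tl u @ [- sum_list u]) = poly_image (d + r) r b (rotate_vars r z)"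
    by (simp add: poly_image_lie_C[OF assms] consec_diffs_rotate_vars[OF \<open>1 \<le> r\<close>] z)
  also have "\<dots> = poly_image (d + r) r b z"
    using rot by blast
  also have "\<dots> = hom_eval (ma b) r d u"
    by (simp add: poly_image_lie_C[OF assms] z)
  finally show "hom_eval (ma b) r d (tl u @ [- sum_list u]) = hom_eval (ma b) r d u" .
next
  fix n r z
  assume inv: "\<forall>r\<ge>1. \<forall>d. \<forall>u::rat list. length u = r \<longrightarrow>
    hom_eval (ma b) r d (tl u @ [- sum_list u]) = hom_eval (ma b) r d u"
  show "poly_image n r b (rotate_vars r z) = poly_image n r b z"
  proof (cases "r = 0 \<or> n < r")
    case True
    then show ?thesis
      by (auto simp: poly_image_eq_0)
  next
    case False
    then have "1 \<le> r" "r \<le> n"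
      by auto
    then show ?thesis
      using inv by (simp add: poly_image_lie_C[OF assms] consec_diffs_rotate_vars)
  qed
qed

theorem proposition12:
  assumes "b \<in> lie_C"
  shows "push_ser b = b \<longleftrightarrow> push_invariant_mould (ma b)"
  unfolding push_ser_eq_iff lie_C_rotation_invariant_iff[OF assms] push_invariant_mould_iff ..

end
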